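(* Let $n\ge2$ and $A,B\in M_n(\mathbb C)$. Then $\mathbb C A=\mathbb C B$ if and only if $({}^\perp A)\cap\mathcal R_1=({}^\perp B)\cap\mathcal R_1$.
   Context: $M_n(\mathbb C)$ carries the operator (spectral) norm. $X\perp Y$ (Birkhoff–James orthogonality) means $\|X+\lambda Y\|\ge\|X\|$ for all $\lambda\in\mathbb C$; ${}^\perp A:=\{X: X\perp A\}$. $\mathcal R_1:=\{X\in M_n(\mathbb C):\mathrm{rk}\,X=1\}$. *)

theory Defs
  imports "HOL-Analysis.Analysis"
begin

definition opnorm :: "complex^'n^'n \<Rightarrow> real" where
  "opnorm A = onorm (\<lambda>x::complex^'n. A *v x)"

definition cscale :: "complex \<Rightarrow> complex^'n^'m \<Rightarrow> complex^'n^'m" where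
  "cscale c A = (\<chi> i j. c * A$i$j)"

definition bj_orth :: "complex^'n^'n \<Rightarrow> complex^'n^'n \<Rightarrow> bool" where
  "bj_orth X Y \<longleftrightarrow> (\<forall>c::complex. opnorm (X + cscale c Y) \<ge> opnorm X)"

definition lperp :: "complex^'n^'n \<Rightarrow> (complex^'n^'n) set" where
  "lperp A = {X. bj_orth X A}"

definition rank_one :: "(complex^'n^'n) set" where
  "rank_one = {X. rank X = 1}"

definition cline :: "complex^'n^'n \<Rightarrow> (complex^'n^'n) set" where
  "cline A = {cscale c A | c. True}"

end

theory Submission
  imports Defs
begin

(*
  On complex^'n^'n, norm is the Frobenius norm.  For the rank-one matrix X with entries
  cnj (x_i y_j) both opnorm X and norm X equal norm x * norm y.  Testing X + l A on the vector y
  and pairing the result with x gives opnorm (X + l A) >= norm x * norm y as soon as x^T A y = 0,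
  so then X is orthogonal to A.  Conversely, if x^T A y <> 0, then A has nonzero Frobenius inner
  product with X, so moving from X a little in the direction of a suitable multiple of A
  decreases the Frobenius norm, hence the operator norm, below opnorm X.  Thus the rank-one
  matrices orthogonal to A determine the zero set of the bilinear form x^T A y, and two bilinear
  forms with the same zero set are proportional.
*)

definition bilin_form :: "'a::comm_semiring_1^'n^'m \<Rightarrow> 'a^'m \<Rightarrow> 'a^'n \<Rightarrow> 'a" where
  "bilin_form A x y = (\<Sum>i\<in>UNIV. \<Sum>j\<in>UNIV. x$i * A$i$j * y$j)"

lemma bilin_form_add_left: "bilin_form A (x + x') y = bilin_form A x y + bilin_form A x' y"
  by (simp add: bilin_form_def algebra_simps sum.distrib)

lemma bilin_form_diff_scale_left:
  fixes A :: "'a::comm_ring_1^'n^'m"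
  shows "bilin_form A (x - a *s x') y = bilin_form A x y - a * bilin_form A x' y"
  by (simp add: bilin_form_def algebra_simps sum_subtractf sum_distrib_left)

lemma bilin_form_diff_scale_right:
  fixes A :: "'a::comm_ring_1^'n^'m"
  shows "bilin_form A x (y - a *s y') = bilin_form A x y - a * bilin_form A x y'"
  by (simp add: bilin_form_def algebra_simps sum_subtractf sum_distrib_left)

lemma bilin_form_zero_left [simp]: "bilin_form A 0 y = 0"
  and bilin_form_zero_right [simp]: "bilin_form A x 0 = 0"
  by (simp_all add: bilin_form_def)

lemma bilin_form_axis: "bilin_form A (axis i 1) (axis j 1) = A$i$j"
proof -
  have "(\<Sum>i'\<in>UNIV. \<Sum>j'\<in>UNIV. axis i 1 $ i' * A$i'$j' * axis j 1 $ j') = A$i$j"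
    by (simp add: axis_def if_distrib if_distribR sum.If_cases)
  then show ?thesis by (simp add: bilin_form_def)
qed

lemma linear_functionals_same_kernel_proportional:
  fixes f g :: "'a::field^'n \<Rightarrow> 'a"
  assumes f: "\<And>x y a. f (x - a *s y) = f x - a * f y"
    and g: "\<And>x y a. g (x - a *s y) = g x - a * g y"
    and kernel: "\<And>x. f x = 0 \<longleftrightarrow> g x = 0"
  shows "\<exists>k. \<forall>x. g x = k * f x"
proof (cases "\<forall>x. f x = 0")
  case True
  then show ?thesis using kernel by auto
next
  case False
  then obtain x0 where x0: "f x0 \<noteq> 0" by auto
  have "g x = (g x0 / f x0) * f x" for x
  proof -
    have "f (x - (f x / f x0) *s x0) = 0" using f x0 by simp
    then have "g (x - (f x / f x0) *s x0) = 0" using kernel by blast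
    then show ?thesis using g x0 by (simp add: field_simps)
  qed
  then show ?thesis by blast
qed

lemma additive_functions_common_nonzero:
  fixes f g :: "'v::plus \<Rightarrow> 'a::comm_monoid_add"
  assumes "\<And>x y. f (x + y) = f x + f y" "\<And>x y. g (x + y) = g x + g y"
    and "f x1 \<noteq> 0" "g x2 \<noteq> 0"
  shows "\<exists>x. f x \<noteq> 0 \<and> g x \<noteq> 0"
proof (cases "g x1 = 0 \<and> f x2 = 0")
  case True
  then show ?thesis using assms by (intro exI[of _ "x1 + x2"]) simp
next
  case False
  then show ?thesis using assms(3,4) by blast
qed

lemma bilin_forms_same_zeros_proportional:
  fixes A B :: "'a::field^'n^'m"
  assumes zeros: "\<And>x y. bilin_form A x y = 0 \<longleftrightarrow> bilin_form B x y = 0"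
  shows "\<exists>k. \<forall>x y. bilin_form B x y = k * bilin_form A x y"
proof -
  have "\<forall>y. \<exists>c. \<forall>x. bilin_form B x y = c * bilin_form A x y"
    using linear_functionals_same_kernel_proportional
        [of "\<lambda>x. bilin_form A x y" "\<lambda>x. bilin_form B x y" for y]
      bilin_form_diff_scale_left zeros by blast
  then obtain C where C: "\<And>x y. bilin_form B x y = C y * bilin_form A x y" by metis
  have "\<forall>x. \<exists>d. \<forall>y. bilin_form B x y = d * bilin_form A x y"
    using linear_functionals_same_kernel_proportional
        [of "\<lambda>y. bilin_form A x y" "\<lambda>y. bilin_form B x y" for x]
      bilin_form_diff_scale_right zeros by blast
  then obtain D where D: "\<And>x y. bilin_form B x y = D x * bilin_form A x y" by metis
  have C_eq_D: "C y = D x" if "bilin_form A x y \<noteq> 0" for x y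
    using C[of x y] D[of x y] that by simp
  show ?thesis
  proof (cases "\<forall>x y. bilin_form A x y = 0")
    case True
    then show ?thesis using zeros by auto
  next
    case False
    then obtain x0 y0 where xy0: "bilin_form A x0 y0 \<noteq> 0" by auto
    have "bilin_form B x y = C y0 * bilin_form A x y" for x y
    proof (cases "bilin_form A x y = 0")
      case True
      then show ?thesis using zeros by simp
    next
      case False
      then obtain x' where "bilin_form A x' y \<noteq> 0" "bilin_form A x' y0 \<noteq> 0"
        using additive_functions_common_nonzero
            [of "\<lambda>x. bilin_form A x y" "\<lambda>x. bilin_form A x y0"]
          xy0 by (auto simp: bilin_form_add_left)
      then have "C y = C y0" using C_eq_D by metis
      then show ?thesis using C by simp
    qed
    then show ?thesis by blast
  qed
qed

lemma matrices_same_bilin_form_zeros_proportional: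
  fixes A B :: "'a::field^'n^'m"
  assumes "\<And>x y. bilin_form A x y = 0 \<longleftrightarrow> bilin_form B x y = 0"
  shows "\<exists>k. \<forall>i j. B$i$j = k * A$i$j"
proof -
  obtain k where "\<And>x y. bilin_form B x y = k * bilin_form A x y"
    using bilin_forms_same_zeros_proportional assms by blast
  then have "B$i$j = k * A$i$j" for i j
    using bilin_form_axis[of B i j] bilin_form_axis[of A i j] by metis
  then show ?thesis by blast
qed

definition conj_outer :: "complex^'n \<Rightarrow> complex^'m \<Rightarrow> complex^'m^'n" where
  "conj_outer x y = (\<chi> i j. cnj (x$i * y$j))"

lemma rank_conj_outer:
  fixes x y :: "complex^'n"
  assumes "x \<noteq> 0" "y \<noteq> 0"
  shows "rank (conj_outer x y) = 1"
proof -
  define w :: "complex^'n" where "w = (\<chi> j. cnj (y$j))"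
  have "w \<noteq> 0" using assms(2) by (auto simp: w_def vec_eq_iff)
  obtain i where i: "x$i \<noteq> 0" using assms(1) by (metis vec_eq_iff zero_index)
  have row: "row k (conj_outer x y) = cnj (x$k) *s w" for k
    by (simp add: row_def conj_outer_def w_def vec_eq_iff)
  have "rows (conj_outer x y) \<subseteq> vec.span {w}"
    using vec.span_scale[OF vec.span_base[of w "{w}"]] by (auto simp: rows_def row)
  then have "vec.dim (rows (conj_outer x y)) \<le> vec.dim {w}" by (rule vec.dim_mono)
  moreover have "cnj (x$i) *s w \<noteq> 0" using i \<open>w \<noteq> 0\<close> by simp
  moreover have "{cnj (x$i) *s w} \<subseteq> rows (conj_outer x y)"
    by (auto simp: rows_def row[symmetric])
  then have "vec.dim {cnj (x$i) *s w} \<le> vec.dim (rows (conj_outer x y))" by (rule vec.dim_subset)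
  ultimately show ?thesis using \<open>w \<noteq> 0\<close> unfolding row_rank_def_gen by simp
qed

lemma norm_conj_outer: "norm (conj_outer x y) = norm x * norm y"
proof -
  have "norm (conj_outer x y $ i) = cmod (x$i) * norm y" for i
    by (simp add: conj_outer_def norm_vec_def norm_mult L2_set_right_distrib)
  then show ?thesis by (simp add: norm_vec_def L2_set_left_distrib)
qed

lemma cmod_sum_mult_le_norm_mult:
  fixes x y :: "complex^'n"
  shows "cmod (\<Sum>i\<in>UNIV. x$i * y$i) \<le> norm x * norm y"
proof -
  have "cmod (\<Sum>i\<in>UNIV. x$i * y$i) \<le> (\<Sum>i\<in>UNIV. \<bar>cmod (x$i)\<bar> * \<bar>cmod (y$i)\<bar>)"
    using norm_sum[of "\<lambda>i. x$i * y$i" UNIV] by (simp add: norm_mult)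
  also have "\<dots> \<le> norm x * norm y"
    unfolding norm_vec_def by (rule L2_set_mult_ineq)
  finally show ?thesis .
qed

lemma norm_matrix_vector_mult_le:
  fixes M :: "complex^'n^'m"
  shows "norm (M *v x) \<le> norm M * norm x"
proof -
  have row: "norm ((M *v x)$i) \<le> norm (M$i) * norm x" for i
    using cmod_sum_mult_le_norm_mult[of "M$i" x] by (simp add: matrix_vector_mult_def)
  have "norm (M *v x) = L2_set (\<lambda>i. norm ((M *v x)$i)) UNIV"
    by (simp add: norm_vec_def)
  also have "\<dots> \<le> L2_set (\<lambda>i. norm (M$i) * norm x) UNIV"
    by (rule L2_set_mono) (use row in auto)
  also have "\<dots> = norm M * norm x"
    by (simp add: norm_vec_def L2_set_left_distrib)
  finally show ?thesis .
qed

lemma opnorm_le_norm: "opnorm M \<le> norm M"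
  unfolding opnorm_def by (rule onorm_bound) (auto simp: norm_matrix_vector_mult_le)

lemma norm_matrix_vector_mult_le_opnorm: "norm (M *v x) \<le> opnorm M * norm x"
  unfolding opnorm_def by (rule onorm) simp

lemma opnorm_nonneg: "0 \<le> opnorm M"
  unfolding opnorm_def by (rule onorm_pos_le) simp

lemma of_real_norm_power2_vec:
  "complex_of_real ((norm (x::complex^'n))\<^sup>2) = (\<Sum>i\<in>UNIV. x$i * cnj (x$i))"
proof -
  have "(norm x)\<^sup>2 = (\<Sum>i\<in>UNIV. (cmod (x$i))\<^sup>2)"
    by (simp add: norm_vec_def L2_set_def sum_nonneg)
  then have "complex_of_real ((norm x)\<^sup>2) = (\<Sum>i\<in>UNIV. (complex_of_real (cmod (x$i)))\<^sup>2)"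
    by simp
  also have "\<dots> = (\<Sum>i\<in>UNIV. x$i * cnj (x$i))"
    by (rule sum.cong) (simp_all only: of_real_power[symmetric] complex_norm_square)
  finally show ?thesis .
qed

lemma inner_nonzero_imp_norm_add_scaleR_less:
  fixes x a :: "'a::real_inner"
  assumes "x \<bullet> a \<noteq> 0"
  shows "\<exists>t. norm (x + t *\<^sub>R a) < norm x"
proof -
  have "a \<noteq> 0" using assms by auto
  define t where "t = - (x \<bullet> a) / (a \<bullet> a)"
  have "(norm (x + t *\<^sub>R a))\<^sup>2 = (norm x)\<^sup>2 + 2 * t * (x \<bullet> a) + t\<^sup>2 * (a \<bullet> a)"
    unfolding power2_norm_eq_inner
    by (simp add: inner_add_left inner_add_right inner_commute power2_eq_square algebra_simps)
  also have "\<dots> = (norm x)\<^sup>2 - (x \<bullet> a)\<^sup>2 / (a \<bullet> a)"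
    using \<open>a \<noteq> 0\<close> by (simp add: t_def power2_eq_square field_simps)
  also have "\<dots> < (norm x)\<^sup>2"
    using assms \<open>a \<noteq> 0\<close> by simp
  finally show ?thesis by (auto dest: power_less_imp_less_base)
qed

lemma cscale_scaleR: "t *\<^sub>R cscale c A = cscale (complex_of_real t * c) A"
  by (simp add: cscale_def vec_eq_iff) (simp add: scaleR_conv_of_real)

lemma inner_conj_outer_cscale:
  "conj_outer x y \<bullet> cscale c A = Re (c * bilin_form A x y)"
proof -
  have "conj_outer x y \<bullet> cscale c A = (\<Sum>i\<in>UNIV. \<Sum>j\<in>UNIV. Re (c * (x$i * A$i$j * y$j)))"
    by (simp add: inner_vec_def conj_outer_def cscale_def inner_complex_def algebra_simps)
  also have "\<dots> = Re (c * bilin_form A x y)"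
    by (simp only: bilin_form_def sum_distrib_left Re_sum)
  finally show ?thesis .
qed

lemma norm_mult_le_opnorm_conj_outer_add:
  fixes A :: "complex^'n^'n"
  assumes "l * bilin_form A x y = 0"
  shows "norm x * norm y \<le> opnorm (conj_outer x y + cscale l A)"
proof -
  define M where "M = conj_outer x y + cscale l A"
  define S where "S = (\<Sum>i\<in>UNIV. x$i * (M *v y)$i)"
  have "S = (\<Sum>i\<in>UNIV. x$i * cnj (x$i)) * (\<Sum>j\<in>UNIV. y$j * cnj (y$j)) + l * bilin_form A x y"
    unfolding S_def M_def
    by (simp add: matrix_vector_mult_def conj_outer_def cscale_def bilin_form_def sum_distrib_left
        sum_distrib_right sum.distrib algebra_simps)
       (rule sum.swap)
  also have "\<dots> = complex_of_real ((norm x * norm y)\<^sup>2)"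
    using assms by (simp only: power_mult_distrib of_real_mult of_real_norm_power2_vec) simp
  finally have "cmod S = (norm x * norm y)\<^sup>2"
    by (simp only: norm_of_real) simp
  then have "(norm x * norm y)\<^sup>2 \<le> norm x * norm (M *v y)"
    using cmod_sum_mult_le_norm_mult[of x "M *v y"] unfolding S_def by simp
  also have "\<dots> \<le> norm x * (opnorm M * norm y)"
    by (simp add: mult_left_mono norm_matrix_vector_mult_le_opnorm)
  finally have key: "(norm x * norm y) * (norm x * norm y) \<le> opnorm M * (norm x * norm y)"
    by (simp add: power2_eq_square algebra_simps)
  show ?thesis
  proof (cases "norm x * norm y = 0")
    case True
    show ?thesis unfolding M_def[symmetric] True by (rule opnorm_nonneg)
  next
    case False
    then have "0 < norm x * norm y" by (simp add: less_le)
    with key show ?thesis unfolding M_def by (rule mult_right_le_imp_le)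
  qed
qed

lemma opnorm_conj_outer:
  fixes x y :: "complex^'n"
  shows "opnorm (conj_outer x y) = norm x * norm y"
proof -
  have "norm x * norm y \<le> opnorm (conj_outer x y + cscale 0 A)" for A :: "complex^'n^'n"
    by (rule norm_mult_le_opnorm_conj_outer_add) simp
  moreover have "conj_outer x y + cscale 0 A = conj_outer x y" for A :: "complex^'n^'n"
    by (simp add: cscale_def vec_eq_iff)
  ultimately show ?thesis
    using opnorm_le_norm[of "conj_outer x y"] norm_conj_outer[of x y] by (metis antisym)
qed

lemma bj_orth_conj_outer_iff:
  fixes A :: "complex^'n^'n"
  shows "bj_orth (conj_outer x y) A \<longleftrightarrow> bilin_form A x y = 0"
proof
  assume "bilin_form A x y = 0"
  then show "bj_orth (conj_outer x y) A"
    unfolding bj_orth_def opnorm_conj_outer by (simp add: norm_mult_le_opnorm_conj_outer_add)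
next
  assume orth: "bj_orth (conj_outer x y) A"
  show "bilin_form A x y = 0"
  proof (rule ccontr)
    define b where "b = bilin_form A x y"
    assume "bilin_form A x y \<noteq> 0"
    then have "conj_outer x y \<bullet> cscale (cnj b) A \<noteq> 0"
      by (auto simp: inner_conj_outer_cscale b_def complex_eq_iff)
    then obtain t where t: "norm (conj_outer x y + cscale (of_real t * cnj b) A) < norm (conj_outer x y)"
      using inner_nonzero_imp_norm_add_scaleR_less cscale_scaleR by metis
    have "opnorm (conj_outer x y) \<le> opnorm (conj_outer x y + cscale (of_real t * cnj b) A)"
      using orth unfolding bj_orth_def by blast
    also have "\<dots> \<le> norm (conj_outer x y + cscale (of_real t * cnj b) A)"
      by (rule opnorm_le_norm)
    finally show False
      using t by (simp add: opnorm_conj_outer norm_conj_outer)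
  qed
qed

lemma cscale_one: "cscale 1 A = A"
  by (simp add: cscale_def vec_eq_iff)

lemma cscale_cscale: "cscale a (cscale b A) = cscale (a * b) A"
  by (simp add: cscale_def vec_eq_iff mult.assoc)

lemma self_in_cline: "A \<in> cline A"
  unfolding cline_def by (auto intro: exI[of _ 1] simp: cscale_one)

lemma cline_subset: "B \<in> cline A \<Longrightarrow> cline B \<subseteq> cline A"
  by (auto simp: cline_def cscale_cscale)

lemma cline_eq_iff: "cline A = cline B \<longleftrightarrow> A \<in> cline B \<and> B \<in> cline A"
  using self_in_cline cline_subset by blast

lemma in_clineI: "\<forall>i j. B$i$j = k * A$i$j \<Longrightarrow> B \<in> cline A"
  by (auto simp: cline_def cscale_def vec_eq_iff)

lemma lperp_subset: "B \<in> cline A \<Longrightarrow> lperp A \<subseteq> lperp B"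
  by (auto simp: cline_def lperp_def bj_orth_def cscale_cscale)

lemma bilin_form_eq_0_iff_conj_outer_in_lperp:
  fixes A :: "complex^'n^'n"
  assumes "x \<noteq> 0" "y \<noteq> 0"
  shows "bilin_form A x y = 0 \<longleftrightarrow> conj_outer x y \<in> lperp A \<inter> rank_one"
  using rank_conj_outer[OF assms] by (simp add: lperp_def rank_one_def bj_orth_conj_outer_iff)

theorem lemma3p7:
  fixes A B :: "complex^'n^'n"
  assumes "CARD('n) \<ge> 2"
  shows "cline A = cline B \<longleftrightarrow> lperp A \<inter> rank_one = lperp B \<inter> rank_one"
proof
  assume "cline A = cline B"
  then show "lperp A \<inter> rank_one = lperp B \<inter> rank_one"
    using lperp_subset by (auto simp: cline_eq_iff)
next
  assume same: "lperp A \<inter> rank_one = lperp B \<inter> rank_one"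
  have "bilin_form A x y = 0 \<longleftrightarrow> bilin_form B x y = 0" for x y
    by (cases "x = 0 \<or> y = 0") (auto simp: same bilin_form_eq_0_iff_conj_outer_in_lperp)
  then have "B \<in> cline A" "A \<in> cline B"
    by (metis in_clineI matrices_same_bilin_form_zeros_proportional)+
  then show "cline A = cline B" by (simp add: cline_eq_iff)
qed

end
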